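(* Let $(X,d,W)$ be a UCW-hyperbolic space with monotone modulus of uniform convexity $\eta$, $C\subseteq X$ nonempty and convex, $\mu\ge1$, and $T:C\to C$ satisfying condition $(E_\mu)$. Let $L\in\mathbb{N}$, $L\ge2$, $(\lambda_n)\subseteq[1/L,1-1/L]$, $x\in C$ and $x_0=x$, $x_{n+1}=(1-\lambda_n)x_n+\lambda_nTx_n$. Let $b>0$ be such that for every $\gamma>0$ there exists $p\in C$ with $d(x,p)\le b$ and $d(p,Tp)\le\gamma$. Then for every $k\in\mathbb{N}$ and $g:\mathbb{N}\to\mathbb{N}$ there exists $N\le\Phi^+$ such that $d(x_m,Tx_m)\le\frac1{k+1}$ for all $m\in[N,N+g(N)]$, where $\Phi^+=h^{(M)}(0)$ is the $M$-fold iterate of $h(n)=g(n)+n+1$ applied to $0$, $M=\lceil3(b+1)/\theta\rceil$ and $\theta=\frac1{4(k+1)L^2}\eta\left(b+1,\frac1{4(k+1)(b+1)}\right)$. If moreover $\eta(r,\varepsilon)\ge\varepsilon\cdot\tilde\eta(r,\varepsilon)$ with $\tilde\eta$ increasing in $\varepsilon$, the same holds with $\eta$ replaced by $\tilde\eta$ in the definition of $\theta$.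
   Context: A $W$-hyperbolic space is a metric space $(X,d)$ with $W:X\times X\times[0,1]\to X$, writing $(1-\lambda)x+\lambda y:=W(x,y,\lambda)$, such that for all $x,y,z,w\in X$, $\lambda,\tilde\lambda\in[0,1]$: $d(z,W(x,y,\lambda))\le(1-\lambda)d(z,x)+\lambda d(z,y)$; $d(W(x,y,\lambda),W(x,y,\tilde\lambda))=|\lambda-\tilde\lambda|d(x,y)$; $W(x,y,\lambda)=W(y,x,1-\lambda)$; $d(W(x,z,\lambda),W(y,w,\lambda))\le(1-\lambda)d(x,y)+\lambda d(z,w)$. It is uniformly convex with modulus $\eta:(0,\infty)\times(0,2]\to(0,1]$ if for all $r>0$, $\varepsilon\in(0,2]$, $a,x,y\in X$: $d(x,a)\le r$, $d(y,a)\le r$, $d(x,y)\ge\varepsilon r$ imply $d(\frac12x+\frac12y,a)\le(1-\eta(r,\varepsilon))r$. It is UCW-hyperbolic if this holds with $\eta$ monotone, i.e. nonincreasing in the first argument. $C$ is convex if $W(x,y,\lambda)\in C$ for $x,y\in C$. $T$ satisfies condition $(E_\mu)$ if $d(x,Ty)\le\mu d(Tx,x)+d(x,y)$ for all $x,y\in C$. *)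

theory Defs
  imports "HOL-Analysis.Analysis"
begin

text \<open>A W-hyperbolic space: the metric space is the type 'a (with its dist),
  W x y l stands for (1-l)x + l y.\<close>
definition W_hyperbolic :: "('a::metric_space \<Rightarrow> 'a \<Rightarrow> real \<Rightarrow> 'a) \<Rightarrow> bool" where
  "W_hyperbolic W \<longleftrightarrow>
    (\<forall>x y z w l l'. 0 \<le> l \<and> l \<le> 1 \<and> 0 \<le> l' \<and> l' \<le> 1 \<longrightarrow>
       dist z (W x y l) \<le> (1 - l) * dist z x + l * dist z y \<and>
       dist (W x y l) (W x y l') = \<bar>l - l'\<bar> * dist x y \<and>
       W x y l = W y x (1 - l) \<and>
       dist (W x z l) (W y w l) \<le> (1 - l) * dist x y + l * dist z w)"

definition uc_modulus :: "('a::metric_space \<Rightarrow> 'a \<Rightarrow> real \<Rightarrow> 'a) \<Rightarrow> (real \<Rightarrow> real \<Rightarrow> real) \<Rightarrow> bool" where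
  "uc_modulus W \<eta> \<longleftrightarrow>
    (\<forall>r e. 0 < r \<and> 0 < e \<and> e \<le> 2 \<longrightarrow> 0 < \<eta> r e \<and> \<eta> r e \<le> 1) \<and>
    (\<forall>r e a x y. 0 < r \<and> 0 < e \<and> e \<le> 2 \<and> dist x a \<le> r \<and> dist y a \<le> r \<and> dist x y \<ge> e * r
       \<longrightarrow> dist (W x y (1/2)) a \<le> (1 - \<eta> r e) * r)"

definition monotone_modulus :: "(real \<Rightarrow> real \<Rightarrow> real) \<Rightarrow> bool" where
  "monotone_modulus \<eta> \<longleftrightarrow>
    (\<forall>r s e. 0 < r \<and> r \<le> s \<and> 0 < e \<and> e \<le> 2 \<longrightarrow> \<eta> s e \<le> \<eta> r e)"

definition UCW_hyperbolic :: "('a::metric_space \<Rightarrow> 'a \<Rightarrow> real \<Rightarrow> 'a) \<Rightarrow> (real \<Rightarrow> real \<Rightarrow> real) \<Rightarrow> bool" where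
  "UCW_hyperbolic W \<eta> \<longleftrightarrow> W_hyperbolic W \<and> uc_modulus W \<eta> \<and> monotone_modulus \<eta>"

definition W_convex :: "('a \<Rightarrow> 'a \<Rightarrow> real \<Rightarrow> 'a) \<Rightarrow> 'a set \<Rightarrow> bool" where
  "W_convex W C \<longleftrightarrow> (\<forall>x\<in>C. \<forall>y\<in>C. \<forall>l. 0 \<le> l \<and> l \<le> 1 \<longrightarrow> W x y l \<in> C)"

definition condition_E :: "real \<Rightarrow> 'a::metric_space set \<Rightarrow> ('a \<Rightarrow> 'a) \<Rightarrow> bool" where
  "condition_E \<mu> C T \<longleftrightarrow> (\<forall>x\<in>C. \<forall>y\<in>C. dist x (T y) \<le> \<mu> * dist (T x) x + dist x y)"

primrec KM_iter :: "('a \<Rightarrow> 'a \<Rightarrow> real \<Rightarrow> 'a) \<Rightarrow> ('a \<Rightarrow> 'a) \<Rightarrow> (nat \<Rightarrow> real) \<Rightarrow> 'a \<Rightarrow> nat \<Rightarrow> 'a" where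
  "KM_iter W T lam x 0 = x"
| "KM_iter W T lam x (Suc n) = W (KM_iter W T lam x n) (T (KM_iter W T lam x n)) (lam n)"

definition theta_rate :: "(real \<Rightarrow> real \<Rightarrow> real) \<Rightarrow> nat \<Rightarrow> real \<Rightarrow> nat \<Rightarrow> real" where
  "theta_rate \<eta> L b k =
     1 / (4 * (real k + 1) * (real L)^2) * \<eta> (b + 1) (1 / (4 * (real k + 1) * (b + 1)))"

definition M_rate :: "(real \<Rightarrow> real \<Rightarrow> real) \<Rightarrow> nat \<Rightarrow> real \<Rightarrow> nat \<Rightarrow> nat" where
  "M_rate \<eta> L b k = nat \<lceil>3 * (b + 1) / theta_rate \<eta> L b k\<rceil>"

definition Phi_plus :: "(real \<Rightarrow> real \<Rightarrow> real) \<Rightarrow> nat \<Rightarrow> real \<Rightarrow> nat \<Rightarrow> (nat \<Rightarrow> nat) \<Rightarrow> nat" where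
  "Phi_plus \<eta> L b k g = ((\<lambda>n. g n + n + 1) ^^ M_rate \<eta> L b k) 0"

end

theory Submission imports Defs begin

text \<open>Fix an approximate fixed point p of T within distance b of x, so close to being fixed
  that, by condition (E_\<mu>), T moves no point of C more than a tolerance \<delta> farther from p,
  where \<delta> * \<Phi>+ \<le> 1/2. Then the distances d(x_n, p) grow by at most \<delta> per step, so they
  stay below b + 1/2 up to \<Phi>+; and at every step with d(x_n, T x_n) > 1/(k+1), uniform
  convexity of the ball around p makes them drop by 4\<theta> - \<delta>. If every window [N, N + g N]
  with N = h^j(0), j < M, contained such a step, the distance at \<Phi>+ = h^M(0) would be at most
  b + 1/2 - 4\<theta>M < 0.\<close>

lemma W_hyperbolicD:
  assumes "W_hyperbolic W" "0 \<le> l" "l \<le> 1" "0 \<le> l'" "l' \<le> 1"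
  shows "dist z (W x y l) \<le> (1 - l) * dist z x + l * dist z y"
    and "dist (W x y l) (W x y l') = \<bar>l - l'\<bar> * dist x y"
    and "W x y l = W y x (1 - l)"
  using assms unfolding W_hyperbolic_def by blast+

lemma W_hyperbolic_W_0:
  assumes "W_hyperbolic W"
  shows "W x y 0 = x"
  using W_hyperbolicD(1)[OF assms, of 0 0 x x y] by simp

lemma W_hyperbolic_W_1:
  assumes "W_hyperbolic W"
  shows "W x y 1 = y"
  using W_hyperbolicD(3)[OF assms, of 1 0 x y] W_hyperbolic_W_0[OF assms] by simp

lemma dist_start_W:
  assumes "W_hyperbolic W" "0 \<le> l" "l \<le> 1"
  shows "dist x (W x y l) = l * dist x y"
  using W_hyperbolicD(2)[OF assms, of 0 x y] W_hyperbolic_W_0[OF assms(1)] assms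
  by (simp add: dist_commute)

lemma dist_W_end:
  assumes "W_hyperbolic W" "0 \<le> l" "l \<le> 1"
  shows "dist (W x y l) y = (1 - l) * dist x y"
  using W_hyperbolicD(2)[OF assms, of 1 x y] W_hyperbolic_W_1[OF assms(1)] assms by simp

lemma uc_modulusD:
  assumes "uc_modulus W \<eta>" "0 < r" "0 < e" "e \<le> 2"
  shows "0 < \<eta> r e"
    and "\<lbrakk>dist x a \<le> r; dist y a \<le> r; e * r \<le> dist x y\<rbrakk> \<Longrightarrow> dist (W x y (1/2)) a \<le> (1 - \<eta> r e) * r"
  using assms unfolding uc_modulus_def by blast+

text \<open>Two distinct such points would have a midpoint strictly closer to x and no farther from y,
  contradicting the triangle inequality.\<close>

lemma uc_metric_segment_unique:
  fixes W :: "'a::metric_space \<Rightarrow> 'a \<Rightarrow> real \<Rightarrow> 'a" and x y z z' :: 'a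
  assumes Wh: "W_hyperbolic W" and uc: "uc_modulus W \<eta>" and t: "0 \<le> t" "t \<le> 1"
    and z: "dist x z = t * dist x y" "dist z y = (1 - t) * dist x y"
    and z': "dist x z' = t * dist x y" "dist z' y = (1 - t) * dist x y"
  shows "z = z'"
proof (rule ccontr)
  assume ne: "z \<noteq> z'"
  define r where "r = t * dist x y"
  have "r \<noteq> 0"
    using ne z(1) z'(1) by (auto simp: r_def)
  moreover have "r \<ge> 0"
    using t by (simp add: r_def)
  ultimately have r: "r > 0" by simp
  define e where "e = dist z z' / r"
  have "dist z z' \<le> dist z x + dist x z'" by (rule dist_triangle)
  then have e: "0 < e" "e \<le> 2"
    using ne r z z' by (auto simp: e_def r_def dist_commute field_simps)
  define w where "w = W z z' (1/2)"
  have "dist w x \<le> (1 - \<eta> r e) * r"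
    unfolding w_def using uc_modulusD(2)[OF uc r e, of z x z'] r z z'
    by (simp add: e_def r_def dist_commute)
  moreover have "\<eta> r e * r > 0"
    using uc_modulusD(1)[OF uc r e] r by simp
  ultimately have wx: "dist x w < r"
    by (simp add: dist_commute algebra_simps)
  have "dist y w \<le> (1 - 1/2) * dist y z + 1/2 * dist y z'"
    using W_hyperbolicD(1)[OF Wh, of "1/2" 0 y z z'] by (simp add: w_def)
  then have wy: "dist w y \<le> (1 - t) * dist x y"
    using z z' by (simp add: dist_commute)
  have "dist x y \<le> dist x w + dist w y" by (rule dist_triangle)
  with wx wy show False by (simp add: r_def algebra_simps)
qed

lemma W_eq_W_midpoint:
  fixes W :: "'a::metric_space \<Rightarrow> 'a \<Rightarrow> real \<Rightarrow> 'a" and u v :: 'a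
  assumes Wh: "W_hyperbolic W" and uc: "uc_modulus W \<eta>" and l: "0 \<le> l" "l \<le> 1/2"
  shows "W u v l = W u (W u v (1/2)) (2 * l)"
proof (rule uc_metric_segment_unique[OF Wh uc, of l u _ v])
  define m where "m = W u v (1/2)"
  define z where "z = W u m (2 * l)"
  have um: "dist u m = dist u v / 2"
    using dist_start_W[OF Wh, of "1/2" u v] by (simp add: m_def)
  have mv: "dist m v = dist u v / 2"
    using dist_W_end[OF Wh, of "1/2" u v] by (simp add: m_def)
  have uz: "dist u z = l * dist u v"
    using dist_start_W[OF Wh, of "2 * l" u m] l um by (simp add: z_def)
  have "dist z m = (1 - 2 * l) * (dist u v / 2)"
    using dist_W_end[OF Wh, of "2 * l" u m] l um by (simp add: z_def)
  moreover have "dist z v \<le> dist z m + dist m v" by (rule dist_triangle)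
  moreover have "dist u v \<le> dist u z + dist z v" by (rule dist_triangle)
  ultimately have zv: "dist z v = (1 - l) * dist u v"
    using mv uz by (simp add: algebra_simps)
  show "0 \<le> l" "l \<le> 1" using l by auto
  show "dist u (W u v l) = l * dist u v"
    using dist_start_W[OF Wh, of l u v] l by simp
  show "dist (W u v l) v = (1 - l) * dist u v"
    using dist_W_end[OF Wh, of l u v] l by simp
  show "dist u (W u (W u v (1/2)) (2 * l)) = l * dist u v"
    using uz by (simp add: z_def m_def)
  show "dist (W u (W u v (1/2)) (2 * l)) v = (1 - l) * dist u v"
    using zv by (simp add: z_def m_def)
qed

lemma uc_modulus_W_le_half:
  fixes W :: "'a::metric_space \<Rightarrow> 'a \<Rightarrow> real \<Rightarrow> 'a" and u v a :: 'a
  assumes Wh: "W_hyperbolic W" and uc: "uc_modulus W \<eta>"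
    and l: "c \<le> l" "l \<le> 1/2" and c: "0 \<le> c"
    and s: "0 < s" and e: "0 < e" "e \<le> 2"
    and d: "dist u a \<le> s" "dist v a \<le> s" "e * s \<le> dist u v"
  shows "dist (W u v l) a \<le> s - 2 * c * \<eta> s e * s"
proof -
  define m where "m = W u v (1/2)"
  have am: "dist a m \<le> (1 - \<eta> s e) * s"
    using uc_modulusD(2)[OF uc s e d] by (simp add: m_def dist_commute)
  have "dist a (W u m (2 * l)) \<le> (1 - 2 * l) * dist a u + (2 * l) * dist a m"
    using W_hyperbolicD(1)[OF Wh, of "2 * l" 0 a u m] l c by simp
  also have "\<dots> \<le> (1 - 2 * l) * s + (2 * l) * ((1 - \<eta> s e) * s)"
    using l c d am by (intro add_mono mult_left_mono) (auto simp: dist_commute)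
  also have "\<dots> = s - 2 * l * \<eta> s e * s" by (simp add: algebra_simps)
  also have "\<dots> \<le> s - 2 * c * \<eta> s e * s"
    using l uc_modulusD(1)[OF uc s e] s by (simp add: mult_right_mono)
  finally show ?thesis
    using W_eq_W_midpoint[OF Wh uc _ l(2), of u v] l c by (simp add: m_def dist_commute)
qed

lemma uc_modulus_W:
  fixes W :: "'a::metric_space \<Rightarrow> 'a \<Rightarrow> real \<Rightarrow> 'a" and u v a :: 'a
  assumes Wh: "W_hyperbolic W" and uc: "uc_modulus W \<eta>"
    and l: "c \<le> l" "l \<le> 1 - c" and c: "0 \<le> c"
    and s: "0 < s" and e: "0 < e" "e \<le> 2"
    and d: "dist u a \<le> s" "dist v a \<le> s" "e * s \<le> dist u v"
  shows "dist (W u v l) a \<le> s - 2 * c * \<eta> s e * s"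
proof (cases "l \<le> 1/2")
  case True
  then show ?thesis by (rule uc_modulus_W_le_half[OF Wh uc l(1) _ c s e d])
next
  case False
  have "W u v l = W v u (1 - l)"
    using W_hyperbolicD(3)[OF Wh, of l 0] False l c by simp
  moreover have "dist (W v u (1 - l)) a \<le> s - 2 * c * \<eta> s e * s"
    using uc_modulus_W_le_half[OF Wh uc _ _ c s e d(2,1)] False l d(3)
    by (simp add: dist_commute)
  ultimately show ?thesis by simp
qed

lemma bounded_increments_le:
  fixes D :: "nat \<Rightarrow> real"
  assumes "\<And>n. D (Suc n) \<le> D n + \<delta>" "n \<le> n'"
  shows "D n' \<le> D n + \<delta> * (real n' - real n)"
  using assms(2)
proof (induction n' rule: dec_induct)
  case base
  then show ?case by simp
next
  case (step k)
  then show ?case using assms(1)[of k] by (simp add: algebra_simps)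
qed

lemma funpow_mono_inflationary:
  fixes h :: "nat \<Rightarrow> nat"
  assumes "\<And>n. n \<le> h n" "j \<le> j'"
  shows "(h ^^ j) a \<le> (h ^^ j') a"
  using assms(2)
proof (induction j' rule: dec_induct)
  case (step k)
  then show ?case using assms(1)[of "(h ^^ k) a"] by simp
qed simp

text \<open>The candidate windows start at h^j(0), j < M, for h n = g n + n + 1; they are pairwise
  disjoint, so a failure of P in each of them costs D a total drop of 4\<theta>M.\<close>

lemma metastability_by_descent:
  fixes D :: "nat \<Rightarrow> real" and g :: "nat \<Rightarrow> nat" and M :: nat
  defines "\<Phi> \<equiv> ((\<lambda>n. g n + n + 1) ^^ M) 0"
  assumes M: "b + 1 \<le> 4 * \<theta> * real M"
    and \<delta>: "0 \<le> \<delta>" "\<delta> * real \<Phi> \<le> 1/2"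
    and D_0: "D 0 \<le> b" and D_nonneg: "\<And>n. 0 \<le> D n"
    and D_step: "\<And>n. D (Suc n) \<le> D n + \<delta>"
    and D_descent: "\<And>n. \<not> P n \<Longrightarrow> D n \<le> b + 1/2 \<Longrightarrow> D (Suc n) \<le> D n + \<delta> - 4 * \<theta>"
  shows "\<exists>N \<le> \<Phi>. \<forall>m\<in>{N..N + g N}. P m"
proof (rule ccontr)
  assume no_window: "\<not> ?thesis"
  define N where "N j = ((\<lambda>n. g n + n + 1) ^^ j) 0" for j
  have N_Suc: "N (Suc j) = g (N j) + N j + 1" for j
    by (simp add: N_def)
  have N_le_\<Phi>: "N j \<le> \<Phi>" if "j \<le> M" for j
    unfolding N_def \<Phi>_def by (rule funpow_mono_inflationary[OF _ that]) simp
  have D_bounded: "D n \<le> b + 1/2" if "n \<le> \<Phi>" for n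
  proof -
    have "D n \<le> D 0 + \<delta> * real n"
      using bounded_increments_le[where D = D, OF D_step, of 0 n] by simp
    moreover have "\<delta> * real n \<le> \<delta> * real \<Phi>"
      using that \<delta> by (simp add: mult_left_mono)
    ultimately show ?thesis using D_0 \<delta> by simp
  qed
  have descent: "D (N j) \<le> b + \<delta> * real (N j) - 4 * \<theta> * real j" if "j \<le> M" for j
    using that
  proof (induction j)
    case 0
    then show ?case using D_0 by (simp add: N_def)
  next
    case (Suc j)
    then obtain m where m: "m \<in> {N j..N j + g (N j)}" "\<not> P m"
      using no_window N_le_\<Phi>[of j] by auto
    have "m < N (Suc j)"
      using m N_Suc[of j] by simp
    moreover have "N (Suc j) \<le> \<Phi>"
      using N_le_\<Phi> Suc.prems by blast
    ultimately have "D (Suc m) \<le> D m + \<delta> - 4 * \<theta>"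
      using D_descent D_bounded m(2) by simp
    moreover have "D m \<le> D (N j) + \<delta> * (real m - real (N j))"
      using bounded_increments_le[where D = D, OF D_step, of "N j" m] m by simp
    moreover have "D (N (Suc j)) \<le> D (Suc m) + \<delta> * (real (N (Suc j)) - real (Suc m))"
      using bounded_increments_le[where D = D, OF D_step, of "Suc m" "N (Suc j)"] \<open>m < N (Suc j)\<close>
      by simp
    ultimately show ?case
      using Suc by (simp add: algebra_simps)
  qed
  have "N M = \<Phi>"
    by (simp add: N_def \<Phi>_def)
  then have "D \<Phi> \<le> b + \<delta> * real \<Phi> - 4 * \<theta> * real M"
    using descent[of M] by simp
  then have "D \<Phi> < 0"
    using M \<delta> by simp
  with D_nonneg show False
    by (metis not_le)
qed

lemma condition_E_approx_fixpoint:
  assumes "condition_E \<mu> C T" "0 < \<mu>" "p \<in> C" "y \<in> C" "dist p (T p) \<le> \<delta> / \<mu>"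
  shows "dist p (T y) \<le> dist p y + \<delta>"
proof -
  have "dist p (T y) \<le> \<mu> * dist (T p) p + dist p y"
    using assms(1,3,4) unfolding condition_E_def by blast
  moreover have "\<mu> * dist (T p) p \<le> \<delta>"
    using assms(2,5) by (simp add: dist_commute field_simps)
  ultimately show ?thesis by simp
qed

lemma KM_iter_in:
  assumes "W_convex W C" "\<forall>y\<in>C. T y \<in> C" "x \<in> C" "\<forall>n. 0 \<le> lam n \<and> lam n \<le> 1"
  shows "KM_iter W T lam x n \<in> C"
  by (induction n) (use assms in \<open>auto simp: W_convex_def\<close>)

lemma KM_step_dist_le:
  fixes W :: "'a::metric_space \<Rightarrow> 'a \<Rightarrow> real \<Rightarrow> 'a" and u p :: 'a
  assumes Wh: "W_hyperbolic W" and l: "0 \<le> l" "l \<le> 1" and \<delta>: "0 \<le> \<delta>"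
    and Tu: "dist p (T u) \<le> dist p u + \<delta>"
  shows "dist (W u (T u) l) p \<le> dist u p + \<delta>"
proof -
  have "dist p (W u (T u) l) \<le> (1 - l) * dist p u + l * dist p (T u)"
    using W_hyperbolicD(1)[OF Wh l, of 0] by simp
  also have "\<dots> \<le> (1 - l) * dist p u + l * (dist p u + \<delta>)"
    using Tu l by (simp add: mult_left_mono)
  also have "\<dots> \<le> dist p u + \<delta>"
    using l \<delta> by (simp add: algebra_simps mult_left_le)
  finally show ?thesis by (simp add: dist_commute)
qed

text \<open>The radii s are those of the balls d(x_n, p) + \<delta> around p: they stay below b + 1, and
  exceed \<epsilon>/2 whenever d(x_n, T x_n) > \<epsilon>.\<close>

definition descent_rate :: "(real \<Rightarrow> real \<Rightarrow> real) \<Rightarrow> real \<Rightarrow> real \<Rightarrow> real \<Rightarrow> real \<Rightarrow> bool" where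
  "descent_rate \<eta> c b \<epsilon> \<theta> \<longleftrightarrow>
    (\<forall>s. 0 < s \<and> s \<le> b + 1 \<and> \<epsilon> < 2 * s \<longrightarrow>
      (\<exists>e. 0 < e \<and> e \<le> 2 \<and> e * s \<le> \<epsilon> \<and> 4 * \<theta> \<le> 2 * c * \<eta> s e * s))"

lemma KM_step_descent:
  fixes W :: "'a::metric_space \<Rightarrow> 'a \<Rightarrow> real \<Rightarrow> 'a" and u p :: 'a
  assumes Wh: "W_hyperbolic W" and uc: "uc_modulus W \<eta>"
    and rate: "descent_rate \<eta> c b \<epsilon> \<theta>"
    and l: "c \<le> l" "l \<le> 1 - c" and c: "0 \<le> c"
    and \<delta>: "0 < \<delta>" "\<delta> \<le> 1/2"
    and Tu: "dist p (T u) \<le> dist p u + \<delta>"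
    and u_near: "dist u p \<le> b + 1/2" and u_far: "\<epsilon> < dist u (T u)"
  shows "dist (W u (T u) l) p \<le> dist u p + \<delta> - 4 * \<theta>"
proof -
  define s where "s = dist u p + \<delta>"
  have us: "dist u p \<le> s" and Tus: "dist (T u) p \<le> s"
    using \<delta> Tu by (simp_all add: s_def dist_commute)
  have "dist u (T u) \<le> dist u p + dist p (T u)" by (rule dist_triangle)
  then have "\<epsilon> < 2 * s"
    using u_far us Tus by (simp add: dist_commute)
  moreover have "0 < s" "s \<le> b + 1"
    using \<delta> u_near by (simp_all add: s_def add_nonneg_pos)
  ultimately obtain e where e: "0 < e" "e \<le> 2" "e * s \<le> \<epsilon>" "4 * \<theta> \<le> 2 * c * \<eta> s e * s"
    using rate unfolding descent_rate_def by blast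
  have "dist (W u (T u) l) p \<le> s - 2 * c * \<eta> s e * s"
    using uc_modulus_W[OF Wh uc l c \<open>0 < s\<close> e(1,2) us Tus] e(3) u_far by simp
  with e(4) have "dist (W u (T u) l) p \<le> s - 4 * \<theta>" by linarith
  then show ?thesis by (simp add: s_def)
qed

lemma KM_metastability:
  fixes W :: "'a::metric_space \<Rightarrow> 'a \<Rightarrow> real \<Rightarrow> 'a" and g :: "nat \<Rightarrow> nat"
  assumes Wh: "W_hyperbolic W" and uc: "uc_modulus W \<eta>"
    and C_conv: "W_convex W C" and T_C: "\<forall>y\<in>C. T y \<in> C"
    and mu: "\<mu> \<ge> 1" and E: "condition_E \<mu> C T"
    and c: "0 \<le> c" and lam: "\<forall>n. c \<le> lam n \<and> lam n \<le> 1 - c"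
    and x: "x \<in> C" and b: "0 \<le> b"
    and approx: "\<forall>\<gamma>>0. \<exists>p\<in>C. dist x p \<le> b \<and> dist p (T p) \<le> \<gamma>"
    and \<theta>: "0 < \<theta>" and rate: "descent_rate \<eta> c b \<epsilon> \<theta>"
  shows "\<exists>N \<le> ((\<lambda>n. g n + n + 1) ^^ nat \<lceil>3 * (b + 1) / \<theta>\<rceil>) 0.
           \<forall>m\<in>{N..N + g N}. dist (KM_iter W T lam x m) (T (KM_iter W T lam x m)) \<le> \<epsilon>"
proof -
  define M where "M = nat \<lceil>3 * (b + 1) / \<theta>\<rceil>"
  define \<Phi> where "\<Phi> = ((\<lambda>n. g n + n + 1) ^^ M) 0"
  define \<delta> :: real where "\<delta> = 1 / (2 * (real \<Phi> + 1))"
  have \<delta>: "0 < \<delta>" "\<delta> \<le> 1/2" "\<delta> * real \<Phi> \<le> 1/2"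
    by (simp_all add: \<delta>_def field_simps)
  obtain p where p: "p \<in> C" "dist x p \<le> b" "dist p (T p) \<le> \<delta> / \<mu>"
    using approx \<delta> mu by (metis divide_pos_pos less_le_trans zero_less_one)
  have T_near_p: "dist p (T y) \<le> dist p y + \<delta>" if "y \<in> C" for y
    using condition_E_approx_fixpoint[OF E _ p(1) that p(3)] mu by simp
  have "0 \<le> lam n \<and> lam n \<le> 1" for n
    using lam[rule_format, of n] c by linarith
  then have lam01: "\<forall>n. 0 \<le> lam n \<and> lam n \<le> 1" by blast
  define xs where "xs n = KM_iter W T lam x n" for n
  have xs_C: "xs n \<in> C" for n
    unfolding xs_def by (rule KM_iter_in[OF C_conv T_C x lam01])
  have xs_Suc: "xs (Suc n) = W (xs n) (T (xs n)) (lam n)" for n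
    by (simp add: xs_def)
  have "b + 1 \<le> 4 * \<theta> * real M"
  proof -
    have "3 * (b + 1) / \<theta> \<le> real M"
      unfolding M_def by linarith
    then show ?thesis using \<theta> b by (simp add: field_simps)
  qed
  then have "\<exists>N \<le> \<Phi>. \<forall>m\<in>{N..N + g N}. dist (xs m) (T (xs m)) \<le> \<epsilon>"
    unfolding \<Phi>_def
  proof (rule metastability_by_descent[where D = "\<lambda>n. dist (xs n) p"])
    fix n
    show "dist (xs (Suc n)) p \<le> dist (xs n) p + \<delta>"
      using KM_step_dist_le[where u = "xs n" and T = T, OF Wh _ _ _ T_near_p[OF xs_C]] lam01 \<delta> xs_Suc
      by simp
    assume "\<not> dist (xs n) (T (xs n)) \<le> \<epsilon>" "dist (xs n) p \<le> b + 1/2"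
    then show "dist (xs (Suc n)) p \<le> dist (xs n) p + \<delta> - 4 * \<theta>"
      using KM_step_descent[where u = "xs n" and T = T, OF Wh uc rate _ _ c \<delta>(1,2) T_near_p[OF xs_C]]
        lam xs_Suc
      by simp
  qed (use \<delta> p(2) in \<open>simp_all add: \<Phi>_def xs_def dist_commute\<close>)
  then show ?thesis
    unfolding xs_def \<Phi>_def M_def .
qed

lemma epsilon_rate_bounds:
  assumes "0 \<le> b"
  shows "0 < 1 / (4 * (real k + 1) * (b + 1))" and "1 / (4 * (real k + 1) * (b + 1)) \<le> 2"
proof -
  have "1 * 1 \<le> (real k + 1) * (b + 1)"
    using assms by (intro mult_mono) auto
  then show "0 < 1 / (4 * (real k + 1) * (b + 1))" "1 / (4 * (real k + 1) * (b + 1)) \<le> 2"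
    by (simp_all add: field_simps)
qed

lemma theta_rate_pos:
  assumes "0 < L" "0 < \<eta> (b + 1) (1 / (4 * (real k + 1) * (b + 1)))"
  shows "0 < theta_rate \<eta> L b k"
  using assms by (simp add: theta_rate_def)

lemma descent_rate_theta_rate:
  assumes mono: "monotone_modulus \<eta>" and pos: "0 \<le> \<eta> (b + 1) (1 / (4 * (real k + 1) * (b + 1)))"
    and L: "1 \<le> L" and b: "0 \<le> b"
  shows "descent_rate \<eta> (1 / real L) b (1 / (real k + 1)) (theta_rate \<eta> L b k)"
  unfolding descent_rate_def
proof (intro allI impI, elim conjE)
  fix s assume s: "0 < s" "s \<le> b + 1" and s_large: "1 / (real k + 1) < 2 * s"
  define e where "e = 1 / (4 * (real k + 1) * (b + 1))"
  define \<eta>\<^sub>0 where "\<eta>\<^sub>0 = \<eta> (b + 1) e"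
  note e = epsilon_rate_bounds[OF b, of k, folded e_def]
  have "e * s \<le> e * (b + 1)"
    using s e by simp
  also have "\<dots> = 1 / (4 * (real k + 1))"
    using b by (simp add: e_def)
  also have "\<dots> \<le> 1 / (real k + 1)"
    by (simp add: field_simps)
  finally have es: "e * s \<le> 1 / (real k + 1)" .
  have "\<eta>\<^sub>0 \<le> \<eta> s e"
    using mono s e unfolding monotone_modulus_def \<eta>\<^sub>0_def by blast
  have \<theta>: "theta_rate \<eta> L b k = 1 / (4 * (real k + 1) * (real L)^2) * \<eta>\<^sub>0"
    by (simp add: theta_rate_def \<eta>\<^sub>0_def e_def)
  have "4 * theta_rate \<eta> L b k = 1 / (real k + 1) * \<eta>\<^sub>0 * (1 / (real L)^2)"
    unfolding \<theta> by (simp add: divide_simps)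
  also have "\<dots> \<le> 1 / (real k + 1) * \<eta>\<^sub>0 * (1 / real L)"
    using L pos by (intro mult_left_mono) (auto simp: \<eta>\<^sub>0_def e_def field_simps power2_eq_square)
  also have "\<dots> \<le> (2 * s) * \<eta> s e * (1 / real L)"
    using s_large pos \<open>\<eta>\<^sub>0 \<le> \<eta> s e\<close> s
    by (intro mult_right_mono mult_mono) (auto simp: \<eta>\<^sub>0_def e_def)
  finally show "\<exists>e. 0 < e \<and> e \<le> 2 \<and> e * s \<le> 1 / (real k + 1) \<and>
      4 * theta_rate \<eta> L b k \<le> 2 * (1 / real L) * \<eta> s e * s"
    using e es by (intro exI[of _ e]) (simp add: algebra_simps)
qed

lemma descent_rate_theta_rate_weak_modulus:
  assumes mono: "monotone_modulus \<eta>"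
    and weak: "\<forall>r e. 0 < r \<and> 0 < e \<and> e \<le> 2 \<longrightarrow> 0 < \<eta>' r e \<and> e * \<eta>' r e \<le> \<eta> r e"
    and incr: "\<forall>r e e'. 0 < r \<and> 0 < e \<and> e \<le> e' \<and> e' \<le> 2 \<longrightarrow> \<eta>' r e \<le> \<eta>' r e'"
    and L: "2 \<le> L" and b: "0 \<le> b"
  shows "descent_rate \<eta> (1 / real L) b (1 / (real k + 1)) (theta_rate \<eta>' L b k)"
  unfolding descent_rate_def
proof (intro allI impI, elim conjE)
  fix s assume s: "0 < s" "s \<le> b + 1" and s_large: "1 / (real k + 1) < 2 * s"
  define e where "e = 1 / (4 * (real k + 1) * (b + 1))"
  define \<eta>\<^sub>0 where "\<eta>\<^sub>0 = \<eta>' (b + 1) e"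
  note e = epsilon_rate_bounds[OF b, of k, folded e_def]
  define e\<^sub>s where "e\<^sub>s = 1 / (4 * (real k + 1) * s)"
  have e\<^sub>s: "0 < e\<^sub>s" "e\<^sub>s \<le> 2"
    using s s_large by (simp_all add: e\<^sub>s_def field_simps)
  have e\<^sub>s_s: "e\<^sub>s * s = 1 / (4 * (real k + 1))"
    using s by (simp add: e\<^sub>s_def)
  have "e \<le> e\<^sub>s"
    using s b unfolding e_def e\<^sub>s_def by (simp add: frac_le)
  have \<eta>\<^sub>0: "0 < \<eta>\<^sub>0"
    using weak e b by (simp add: \<eta>\<^sub>0_def)
  text \<open>The modulus is used at the scale-dependent e_s = 1/(4(k+1)s) rather than at e, so that
    the factor e_s lost in passing from \<eta> to \<eta>' is compensated by s.\<close>
  have "e\<^sub>s * \<eta>\<^sub>0 \<le> e\<^sub>s * \<eta>' (b + 1) e\<^sub>s"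
    using incr e b \<open>e \<le> e\<^sub>s\<close> e\<^sub>s unfolding \<eta>\<^sub>0_def by (intro mult_left_mono) auto
  also have "\<dots> \<le> \<eta> (b + 1) e\<^sub>s"
    using weak b e\<^sub>s by auto
  also have "\<dots> \<le> \<eta> s e\<^sub>s"
    using mono s e\<^sub>s unfolding monotone_modulus_def by blast
  finally have \<eta>_s: "e\<^sub>s * \<eta>\<^sub>0 \<le> \<eta> s e\<^sub>s" .
  have \<theta>: "theta_rate \<eta>' L b k = 1 / (4 * (real k + 1) * (real L)^2) * \<eta>\<^sub>0"
    by (simp add: theta_rate_def \<eta>\<^sub>0_def e_def)
  have "4 * theta_rate \<eta>' L b k = 1 / (real k + 1) * \<eta>\<^sub>0 * (1 / (real L)^2)"
    unfolding \<theta> by (simp add: divide_simps)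
  also have "\<dots> \<le> 1 / (real k + 1) * \<eta>\<^sub>0 * (1 / (2 * real L))"
    using L \<eta>\<^sub>0 by (intro mult_left_mono) (auto simp: field_simps power2_eq_square)
  also have "\<dots> = 2 * (1 / real L) * (e\<^sub>s * s) * \<eta>\<^sub>0"
    unfolding e\<^sub>s_s by (simp add: divide_simps)
  also have "\<dots> \<le> 2 * (1 / real L) * \<eta> s e\<^sub>s * s"
  proof -
    have "e\<^sub>s * s * \<eta>\<^sub>0 \<le> \<eta> s e\<^sub>s * s"
      using mult_right_mono[OF \<eta>_s, of s] s by (simp add: ac_simps)
    then show ?thesis
      using mult_left_mono[of _ _ "2 * (1 / real L)"] by (simp add: mult.assoc)
  qed
  finally show "\<exists>e. 0 < e \<and> e \<le> 2 \<and> e * s \<le> 1 / (real k + 1) \<and>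
      4 * theta_rate \<eta>' L b k \<le> 2 * (1 / real L) * \<eta> s e * s"
    using e\<^sub>s e\<^sub>s_s by (intro exI[of _ e\<^sub>s]) (simp add: field_simps)
qed

theorem theorem7p15:
  fixes W :: "'a::metric_space \<Rightarrow> 'a \<Rightarrow> real \<Rightarrow> 'a"
    and \<eta> :: "real \<Rightarrow> real \<Rightarrow> real"
    and C :: "'a set" and T :: "'a \<Rightarrow> 'a" and \<mu> :: real
    and L :: nat and lam :: "nat \<Rightarrow> real" and x :: 'a and b :: real
  assumes ucw: "UCW_hyperbolic W \<eta>"
    and C_ne: "C \<noteq> {}" and C_conv: "W_convex W C"
    and mu: "\<mu> \<ge> 1"
    and T_C: "\<forall>y\<in>C. T y \<in> C"
    and E: "condition_E \<mu> C T"
    and L: "L \<ge> 2"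
    and lam: "\<forall>n. 1 / real L \<le> lam n \<and> lam n \<le> 1 - 1 / real L"
    and x: "x \<in> C"
    and b: "b > 0"
    and approx: "\<forall>\<gamma>>0. \<exists>p\<in>C. dist x p \<le> b \<and> dist p (T p) \<le> \<gamma>"
  shows "(\<forall>(k::nat) (g::nat \<Rightarrow> nat). \<exists>N \<le> Phi_plus \<eta> L b k g.
            \<forall>m\<in>{N..N + g N}. dist (KM_iter W T lam x m) (T (KM_iter W T lam x m)) \<le> 1 / (real k + 1))
       \<and> (\<forall>\<eta>' :: real \<Rightarrow> real \<Rightarrow> real.
            (\<forall>r e. 0 < r \<and> 0 < e \<and> e \<le> 2 \<longrightarrow> 0 < \<eta>' r e \<and> e * \<eta>' r e \<le> \<eta> r e) \<and>
            (\<forall>r e e'. 0 < r \<and> 0 < e \<and> e \<le> e' \<and> e' \<le> 2 \<longrightarrow> \<eta>' r e \<le> \<eta>' r e')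
            \<longrightarrow> (\<forall>(k::nat) (g::nat \<Rightarrow> nat). \<exists>N \<le> Phi_plus \<eta>' L b k g.
                 \<forall>m\<in>{N..N + g N}. dist (KM_iter W T lam x m) (T (KM_iter W T lam x m)) \<le> 1 / (real k + 1)))"
proof -
  have Wh: "W_hyperbolic W" and uc: "uc_modulus W \<eta>" and mono: "monotone_modulus \<eta>"
    using ucw unfolding UCW_hyperbolic_def by auto
  have b0: "0 \<le> b" and L_pos: "0 < L" and c: "0 \<le> 1 / real L"
    using b L by auto
  let ?dist = "\<lambda>m. dist (KM_iter W T lam x m) (T (KM_iter W T lam x m))"
  have rate: "\<exists>N \<le> Phi_plus \<eta>' L b k g. \<forall>m\<in>{N..N + g N}. ?dist m \<le> 1 / (real k + 1)"
    if "0 < \<eta>' (b + 1) (1 / (4 * (real k + 1) * (b + 1)))"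
      and "descent_rate \<eta> (1 / real L) b (1 / (real k + 1)) (theta_rate \<eta>' L b k)"
    for \<eta>' k g
    unfolding Phi_plus_def M_rate_def
    by (rule KM_metastability[OF Wh uc C_conv T_C mu E c lam x b0 approx
          theta_rate_pos[where \<eta> = \<eta>', OF L_pos that(1)] that(2)])
  have pos: "0 < \<eta> (b + 1) (1 / (4 * (real k + 1) * (b + 1)))" for k
    using uc_modulusD(1)[OF uc _ epsilon_rate_bounds[OF b0]] b by simp
  have pos': "0 < \<eta>' (b + 1) (1 / (4 * (real k + 1) * (b + 1)))"
    if "\<forall>r e. 0 < r \<and> 0 < e \<and> e \<le> 2 \<longrightarrow> 0 < \<eta>' r e \<and> e * \<eta>' r e \<le> \<eta> r e" for \<eta>' k
    using that epsilon_rate_bounds[OF b0] b by simp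
  show ?thesis
  proof (intro conjI allI impI; (elim conjE)?)
    show "\<exists>N \<le> Phi_plus \<eta> L b k g. \<forall>m\<in>{N..N + g N}. ?dist m \<le> 1 / (real k + 1)" for k g
      using L by (intro rate pos descent_rate_theta_rate[OF mono less_imp_le[OF pos] _ b0]) auto
    show "\<exists>N \<le> Phi_plus \<eta>' L b k g. \<forall>m\<in>{N..N + g N}. ?dist m \<le> 1 / (real k + 1)"
      if "\<forall>r e. 0 < r \<and> 0 < e \<and> e \<le> 2 \<longrightarrow> 0 < \<eta>' r e \<and> e * \<eta>' r e \<le> \<eta> r e"
        and "\<forall>r e e'. 0 < r \<and> 0 < e \<and> e \<le> e' \<and> e' \<le> 2 \<longrightarrow> \<eta>' r e \<le> \<eta>' r e'"
      for \<eta>' k g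
      by (intro rate pos'[OF that(1)] descent_rate_theta_rate_weak_modulus[OF mono that L b0])
  qed
qed

end
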